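(* Let $\gamma>1$ and let the pressure function of the ideal MHD equations be $$p(q)=(\gamma-1)\left(\mathcal{E}-\frac{(\rho u_x)^2+(\rho u_y)^2+(\rho u_z)^2}{2\rho}-\frac{1}{2}\left(B_x^2+B_y^2+B_z^2\right)\right)$$ for a state vector $q=(\rho,\rho u_x,\rho u_y,\rho u_z,\mathcal{E},B_x,B_y,B_z)\in\mathbb{R}^8$ with $\rho>0$. Fix a grid index $j$, a ratio $\lambda=\Delta t/\Delta x>0$, a state $q^n_j\in\mathbb{R}^8$, and vectors $\hat{\mathbf F}^{rk}_{j\pm\frac12},\hat{\mathbf f}_{j\pm\frac12}\in\mathbb{R}^8$. For $\overrightarrow{\theta}=(\theta_{j-\frac12},\theta_{j+\frac12})\in\mathbb{R}^2$ define $$q^{n+1}_j(\overrightarrow{\theta})=q^n_j-\lambda\left(\tilde{\mathbf F}_{j+\frac12}-\tilde{\mathbf F}_{j-\frac12}\right),\qquad \tilde{\mathbf F}_{j\pm\frac12}=\theta_{j\pm\frac12}\left(\hat{\mathbf F}^{rk}_{j\pm\frac12}-\hat{\mathbf f}_{j\pm\frac12}\right)+\hat{\mathbf f}_{j\pm\frac12}.$$ Let $S_{\rho,I_j}=[0,\Lambda^\rho_{-\frac12,I_j}]\times[0,\Lambda^\rho_{+\frac12,I_j}]$ be the rectangle defined in the context below. Then for every $\alpha\in[0,1]$ and every $\overrightarrow{\theta}^1,\overrightarrow{\theta}^2\in S_{\rho,I_j}$, $$p\left(q^{n+1}_j\left(\alpha\overrightarrow{\theta}^1+(1-\alpha)\overrightarrow{\theta}^2\right)\right)\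 \ge\ \alpha\, p\left(q^{n+1}_j\left(\overrightarrow{\theta}^1\right)\right)+(1-\alpha)\,p\left(q^{n+1}_j\left(\overrightarrow{\theta}^2\right)\right).$$
   Context: Setting: a finite difference scheme for the 1D ideal MHD equations $q_t+\mathbf f(q)_x=0$ on a uniform grid, where $\hat{\mathbf F}^{rk}_{j+\frac12}$ is a high-order (Runge–Kutta combined WENO) numerical flux and $\hat{\mathbf f}_{j+\frac12}$ is the first-order Lax–Friedrichs flux. Denote by $f^\rho_{j\pm\frac12}$ and $\hat f^\rho_{j\pm\frac12}$ the first (density) components of $\hat{\mathbf F}^{rk}_{j\pm\frac12}$ and $\hat{\mathbf f}_{j\pm\frac12}$, and let $\rho^n_j$ be the first component of $q^n_j$. Set $\Gamma_j=\rho^n_j-\lambda(\hat f^\rho_{j+\frac12}-\hat f^\rho_{j-\frac12})$ (the density of the first-order Lax–Friedrichs update) and let $\epsilon^{n+1}_\rho>0$ be a lower bound with $\Gamma_j\ge\epsilon^{n+1}_\rho$ (in the paper $\epsilon^{n+1}_\rho=\min(\min_j\Gamma_j,\epsilon_0)$ with $\epsilon_0=10^{-13}$, the Lax–Friedrichs densities being positive). Let $F_{j\pm\frac12}=f^\rho_{j\pm\frac12}-\hat f^\rho_{j\pm\frac12}$. The bounds $(\Lambda^\rho_{-\frac12,I_j},\Lambda^\rho_{+\frac12,I_j})$ are defined by: (i) if $F_{j-\frac12}\ge0$ and $F_{j+\frac12}\le0$: $(1,1)$; (ii) if $F_{j-\frac12}\ge0$ and $F_{j+\frac12}>0$: $\left(1,\min\left(1,\frac{\epsilon^{n+1}_\rho-\Gamma_j}{-\lambda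 F_{j+\frac12}}\right)\right)$; (iii) if $F_{j-\frac12}<0$ and $F_{j+\frac12}\le0$: $\left(\min\left(1,\frac{\epsilon^{n+1}_\rho-\Gamma_j}{\lambda F_{j-\frac12}}\right),1\right)$; (iv) if $F_{j-\frac12}<0$ and $F_{j+\frac12}>0$: $(1,1)$ if $\lambda F_{j-\frac12}-\lambda F_{j+\frac12}\ge\epsilon^{n+1}_\rho-\Gamma_j$, and otherwise both bounds equal $\frac{\epsilon^{n+1}_\rho-\Gamma_j}{\lambda F_{j-\frac12}-\lambda F_{j+\frac12}}$. With these bounds, the density (first component) of $q^{n+1}_j(\overrightarrow\theta)$ is at least $\epsilon^{n+1}_\rho$ for all $\overrightarrow\theta\in S_{\rho,I_j}$. *)

theory Defs
  imports "HOL-Analysis.Analysis"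
begin

text \<open>State vectors q = (rho, rho u_x, rho u_y, rho u_z, E, B_x, B_y, B_z) are
  elements of real^8, with components indexed 0..7 in this order.\<close>

definition mhd_pressure :: "real \<Rightarrow> real^8 \<Rightarrow> real" where
  "mhd_pressure \<gamma> q = (\<gamma> - 1) * (q$4 - ((q$1)\<^sup>2 + (q$2)\<^sup>2 + (q$3)\<^sup>2) / (2 * q$0)
       - ((q$5)\<^sup>2 + (q$6)\<^sup>2 + (q$7)\<^sup>2) / 2)"

text \<open>Limited flux and updated state q^{n+1}_j(theta), theta = (theta_{j-1/2}, theta_{j+1/2}).
  Arguments: lambda, q^n_j, F^rk_{j-1/2}, F^rk_{j+1/2}, f_{j-1/2}, f_{j+1/2}, theta.\<close>

definition limited_flux :: "real \<Rightarrow> real^8 \<Rightarrow> real^8 \<Rightarrow> real^8" where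
  "limited_flux \<theta> Frk f = \<theta> *\<^sub>R (Frk - f) + f"

definition q_update :: "real \<Rightarrow> real^8 \<Rightarrow> real^8 \<Rightarrow> real^8 \<Rightarrow> real^8 \<Rightarrow> real^8
    \<Rightarrow> real \<times> real \<Rightarrow> real^8" where
  "q_update lam qn Fm Fp fm fp \<theta> =
     qn - lam *\<^sub>R (limited_flux (snd \<theta>) Fp fp - limited_flux (fst \<theta>) Fm fm)"

text \<open>Gamma_j: density of the first-order Lax--Friedrichs update.\<close>
definition Gamma_LF :: "real \<Rightarrow> real^8 \<Rightarrow> real^8 \<Rightarrow> real^8 \<Rightarrow> real" where
  "Gamma_LF lam qn fm fp = qn$0 - lam * (fp$0 - fm$0)"

definition density_bounds :: "real \<Rightarrow> real \<Rightarrow> real \<Rightarrow> real \<Rightarrow> real \<Rightarrow> real \<times> real" where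
  "density_bounds lam eps \<Gamma> Fm Fp =
    (if Fm \<ge> 0 \<and> Fp \<le> 0 then (1, 1)
     else if Fm \<ge> 0 \<and> Fp > 0 then (1, min 1 ((eps - \<Gamma>) / (- lam * Fp)))
     else if Fm < 0 \<and> Fp \<le> 0 then (min 1 ((eps - \<Gamma>) / (lam * Fm)), 1)
     else if lam * Fm - lam * Fp \<ge> eps - \<Gamma> then (1, 1)
     else ((eps - \<Gamma>) / (lam * Fm - lam * Fp), (eps - \<Gamma>) / (lam * Fm - lam * Fp)))"

definition S_rho :: "real \<Rightarrow> real \<Rightarrow> real^8 \<Rightarrow> real^8 \<Rightarrow> real^8 \<Rightarrow> real^8 \<Rightarrow> real^8
    \<Rightarrow> (real \<times> real) set" where
  "S_rho lam eps qn Fm Fp fm fp =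
     (let \<Gamma> = Gamma_LF lam qn fm fp;
          (Lm, Lp) = density_bounds lam eps \<Gamma> (Fm$0 - fm$0) (Fp$0 - fp$0)
      in {0..Lm} \<times> {0..Lp})"

end

theory Submission
  imports Defs
begin

text \<open>Along a segment of limiter parameters the update is affine in \<open>\<theta>\<close>, so the claim
  is the concavity of the pressure, restricted to states of positive density. Concavity holds
  because the kinetic energy \<open>m\<^sup>2/\<rho>\<close> is jointly convex for \<open>\<rho> > 0\<close> (it is the perspective
  of \<open>m\<^sup>2\<close>) and the magnetic energy is convex; positivity of the density on the rectangle
  \<open>S_rho\<close> is exactly what the bounds \<open>density_bounds\<close> are designed to guarantee.\<close>

lemma square_convex_combination_le:
  fixes x y a :: real
  assumes "0 \<le> a" "a \<le> 1"
  shows "(a*x + (1-a)*y)\<^sup>2 \<le> a*x\<^sup>2 + (1-a)*y\<^sup>2"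
proof -
  have "a*x\<^sup>2 + (1-a)*y\<^sup>2 - (a*x + (1-a)*y)\<^sup>2 = a*(1-a)*(x-y)\<^sup>2"
    by (simp add: algebra_simps power2_eq_square)
  moreover have "a*(1-a)*(x-y)\<^sup>2 \<ge> 0" using assms by simp
  ultimately show ?thesis by linarith
qed

lemma square_over_convex_combination_le:
  fixes m1 m2 r1 r2 a :: real
  assumes "r1 > 0" "r2 > 0" "0 \<le> a" "a \<le> 1"
  shows "(a*m1 + (1-a)*m2)\<^sup>2 / (a*r1 + (1-a)*r2) \<le> a * (m1\<^sup>2/r1) + (1-a) * (m2\<^sup>2/r2)"
proof -
  have r: "a*r1 + (1-a)*r2 > 0"
    using assms by (cases "a = 0") (auto intro: add_pos_nonneg)
  have "a * (m1\<^sup>2/r1) + (1-a) * (m2\<^sup>2/r2) - (a*m1 + (1-a)*m2)\<^sup>2 / (a*r1 + (1-a)*r2)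
      = a * (1-a) * (m1*r2 - m2*r1)\<^sup>2 / (r1*r2*(a*r1 + (1-a)*r2))"
    using assms r by (simp add: field_simps power2_eq_square)
  moreover have "a * (1-a) * (m1*r2 - m2*r1)\<^sup>2 / (r1*r2*(a*r1 + (1-a)*r2)) \<ge> 0"
    using assms r by (intro divide_nonneg_pos mult_nonneg_nonneg) auto
  ultimately show ?thesis by linarith
qed

lemma mhd_pressure_eq_sums:
  "mhd_pressure \<gamma> q = (\<gamma> - 1) *
     (q$4 - (\<Sum>i\<in>{1,2,3}. (q$i)\<^sup>2 / q$0) / 2 - (\<Sum>i\<in>{5,6,7}. (q$i)\<^sup>2) / 2)"
  unfolding mhd_pressure_def by (simp add: add_divide_distrib add.assoc)

lemma mhd_pressure_concave:
  fixes q1 q2 :: "real^8" and a \<gamma> :: real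
  assumes "\<gamma> \<ge> 1" "q1$0 > 0" "q2$0 > 0" "0 \<le> a" "a \<le> 1"
  shows "a * mhd_pressure \<gamma> q1 + (1-a) * mhd_pressure \<gamma> q2
    \<le> mhd_pressure \<gamma> (a *\<^sub>R q1 + (1-a) *\<^sub>R q2)"
proof -
  define q where "q = a *\<^sub>R q1 + (1-a) *\<^sub>R q2"
  define kinetic :: "real^8 \<Rightarrow> real" where "kinetic p = (\<Sum>i\<in>{1,2,3}. (p$i)\<^sup>2 / p$0)" for p
  define magnetic :: "real^8 \<Rightarrow> real" where "magnetic p = (\<Sum>i\<in>{5,6,7}. (p$i)\<^sup>2)" for p
  have "kinetic q \<le> a * kinetic q1 + (1-a) * kinetic q2"
    unfolding kinetic_def q_def sum_distrib_left sum.distrib[symmetric] using assms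
    by (intro sum_mono) (simp add: square_over_convex_combination_le del: times_divide_eq_right)
  moreover have "magnetic q \<le> a * magnetic q1 + (1-a) * magnetic q2"
    unfolding magnetic_def q_def sum_distrib_left sum.distrib[symmetric] using assms
    by (intro sum_mono) (simp add: square_convex_combination_le)
  moreover have "q$4 = a * q1$4 + (1-a) * q2$4"
    by (simp add: q_def)
  ultimately have "a * (q1$4 - kinetic q1 / 2 - magnetic q1 / 2)
      + (1-a) * (q2$4 - kinetic q2 / 2 - magnetic q2 / 2)
    \<le> q$4 - kinetic q / 2 - magnetic q / 2"
    by (simp add: algebra_simps) argo
  then have "(\<gamma> - 1) * (a * (q1$4 - kinetic q1 / 2 - magnetic q1 / 2)
      + (1-a) * (q2$4 - kinetic q2 / 2 - magnetic q2 / 2))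
    \<le> (\<gamma> - 1) * (q$4 - kinetic q / 2 - magnetic q / 2)"
    using assms(1) by (intro mult_left_mono) auto
  then show ?thesis
    unfolding mhd_pressure_eq_sums q_def[symmetric] kinetic_def magnetic_def
    by (simp add: algebra_simps)
qed

lemma q_update_convex_combination:
  "q_update lam qn Fm Fp fm fp (a *\<^sub>R \<theta>1 + (1 - a) *\<^sub>R \<theta>2)
   = a *\<^sub>R q_update lam qn Fm Fp fm fp \<theta>1 + (1 - a) *\<^sub>R q_update lam qn Fm Fp fm fp \<theta>2"
  unfolding q_update_def limited_flux_def by (simp add: vec_eq_iff algebra_simps)

lemma q_update_density:
  "(q_update lam qn Fm Fp fm fp (tm, tp))$0
     = Gamma_LF lam qn fm fp + lam * tm * (Fm$0 - fm$0) - lam * tp * (Fp$0 - fp$0)"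
  unfolding q_update_def limited_flux_def Gamma_LF_def by (simp add: algebra_simps)

lemma density_bounds_sound:
  fixes lam eps \<Gamma> A B tm tp :: real
  assumes "lam > 0" "eps \<le> \<Gamma>" "density_bounds lam eps \<Gamma> A B = (Lm, Lp)"
    and "0 \<le> tm" "tm \<le> Lm" "0 \<le> tp" "tp \<le> Lp"
  shows "eps \<le> \<Gamma> + lam * tm * A - lam * tp * B"
proof -
  have "eps \<le> \<Gamma> + tm * (lam * A) - tp * (lam * B)"
  proof (cases "A \<ge> 0"; cases "B \<le> 0")
    assume "A \<ge> 0" "B \<le> 0"
    then have "tm * (lam * A) \<ge> 0" "tp * (lam * B) \<le> 0"
      using assms by (simp_all add: mult_nonneg_nonpos)
    then show ?thesis using assms(2) by linarith
  next
    assume "A \<ge> 0" "\<not> B \<le> 0"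
    then have "tp \<le> (\<Gamma> - eps) / (lam * B)" "lam * B > 0"
      using assms by (auto simp: density_bounds_def minus_divide_left)
    moreover have "tm * (lam * A) \<ge> 0"
      using assms \<open>A \<ge> 0\<close> by simp
    ultimately show ?thesis
      using assms(2) by (simp add: pos_le_divide_eq)
  next
    assume "\<not> A \<ge> 0" "B \<le> 0"
    then have "tm \<le> (eps - \<Gamma>) / (lam * A)" "lam * A < 0"
      using assms by (auto simp: density_bounds_def mult_pos_neg)
    moreover have "tp * (lam * B) \<le> 0"
      using assms \<open>B \<le> 0\<close> by (simp add: mult_nonneg_nonpos)
    ultimately show ?thesis
      using assms(2) by (simp add: neg_le_divide_eq)
  next
    assume "\<not> A \<ge> 0" "\<not> B \<le> 0"
    then have lA: "lam * A < 0" and lB: "lam * B > 0"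
      using assms(1) by (auto simp: mult_pos_neg)
    show ?thesis
    proof (cases "lam * A - lam * B \<ge> eps - \<Gamma>")
      case True
      then have "tm \<le> 1" "tp \<le> 1"
        using assms \<open>\<not> A \<ge> 0\<close> \<open>\<not> B \<le> 0\<close> by (auto simp: density_bounds_def)
      then have "tm * (lam * A) \<ge> lam * A" "tp * (lam * B) \<le> lam * B"
        using lA lB by (auto simp: mult_le_cancel_right2 mult_le_cancel_right1)
      then show ?thesis using True by linarith
    next
      case False
      define c where "c = (eps - \<Gamma>) / (lam * A - lam * B)"
      have "tm \<le> c" "tp \<le> c"
        using assms \<open>\<not> A \<ge> 0\<close> \<open>\<not> B \<le> 0\<close> False by (auto simp: density_bounds_def c_def)
      then have "tm * (lam * A) \<ge> c * (lam * A)" "tp * (lam * B) \<le> c * (lam * B)"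
        using lA lB by (auto intro: mult_right_mono_neg mult_right_mono)
      moreover have "c * (lam * A - lam * B) = eps - \<Gamma>"
        using \<open>\<not> A \<ge> 0\<close> \<open>\<not> B \<le> 0\<close> assms(1) by (simp add: c_def)
      ultimately show ?thesis by (simp add: algebra_simps)
    qed
  qed
  then show ?thesis by (simp add: algebra_simps)
qed

lemma q_update_density_ge:
  assumes "lam > 0" "eps \<le> Gamma_LF lam qn fm fp" "\<theta> \<in> S_rho lam eps qn Fm Fp fm fp"
  shows "eps \<le> (q_update lam qn Fm Fp fm fp \<theta>)$0"
proof -
  obtain tm tp where \<theta>: "\<theta> = (tm, tp)" by fastforce
  obtain Lm Lp where L: "density_bounds lam eps (Gamma_LF lam qn fm fp)
      (Fm$0 - fm$0) (Fp$0 - fp$0) = (Lm, Lp)"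
    by fastforce
  have "0 \<le> tm" "tm \<le> Lm" "0 \<le> tp" "tp \<le> Lp"
    using assms(3) by (auto simp: S_rho_def \<theta> L)
  then show ?thesis
    unfolding \<theta> q_update_density by (rule density_bounds_sound[OF assms(1,2) L])
qed

theorem lemma1:
  fixes \<gamma> lam eps \<alpha> :: real and qn Fm Fp fm fp :: "real^8" and \<theta>1 \<theta>2 :: "real \<times> real"
  assumes "\<gamma> > 1" and "lam > 0" and "eps > 0"
    and "Gamma_LF lam qn fm fp \<ge> eps"
    and "\<alpha> \<in> {0..1}"
    and "\<theta>1 \<in> S_rho lam eps qn Fm Fp fm fp" and "\<theta>2 \<in> S_rho lam eps qn Fm Fp fm fp"
  shows "mhd_pressure \<gamma> (q_update lam qn Fm Fp fm fp (\<alpha> *\<^sub>R \<theta>1 + (1 - \<alpha>) *\<^sub>R \<theta>2))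
     \<ge> \<alpha> * mhd_pressure \<gamma> (q_update lam qn Fm Fp fm fp \<theta>1)
       + (1 - \<alpha>) * mhd_pressure \<gamma> (q_update lam qn Fm Fp fm fp \<theta>2)"
proof -
  have "(q_update lam qn Fm Fp fm fp \<theta>)$0 > 0" if "\<theta> \<in> S_rho lam eps qn Fm Fp fm fp" for \<theta>
    using q_update_density_ge[OF assms(2,4) that] assms(3) by linarith
  then show ?thesis
    unfolding q_update_convex_combination
    using mhd_pressure_concave[of \<gamma>] assms by simp
qed

end
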